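(* Let $M\in\mathrm{SO}(2n,2n-1)$ be totally positive (all minors of $M$ in the standard basis are strictly positive). Then the middle diagonal entry satisfies $M_{2n,2n}\ge 1$.
   Context: $\mathrm{SO}(2n,2n-1)$ is the group of determinant-one real $(4n-1)\times(4n-1)$ matrices $M$ with $M^TJM=J$, where $J$ is the antidiagonal matrix with $J_{i,4n-i}=(-1)^i$ and all other entries $0$. *)

theory Defs
  imports "Jordan_Normal_Form.Determinant" "Jordan_Normal_Form.DL_Submatrix"
begin

text \<open>Matrices are 0-indexed.  The paper's (1-indexed) form J on R^(4n-1) has
  J_{i,4n-i} = (-1)^i; in 0-indexed form entry (r, 4n-2-r) equals (-1)^(r+1).\<close>

definition Jform :: "nat \<Rightarrow> real mat" where
  "Jform n = mat (4*n - 1) (4*n - 1)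
     (\<lambda>(r, c). if r + c = 4*n - 2 then (-1) ^ (r + 1) else 0)"

definition SO_2n_2n1 :: "nat \<Rightarrow> real mat set" where
  "SO_2n_2n1 n = {M. M \<in> carrier_mat (4*n - 1) (4*n - 1) \<and>
                     transpose_mat M * Jform n * M = Jform n \<and> det M = 1}"

definition totally_positive :: "real mat \<Rightarrow> bool" where
  "totally_positive M \<longleftrightarrow>
     (\<forall>I K. I \<subseteq> {0..<dim_row M} \<longrightarrow> K \<subseteq> {0..<dim_col M} \<longrightarrow> I \<noteq> {} \<longrightarrow>
            card I = card K \<longrightarrow> det (submatrix M I K) > 0)"

end

theory Submission
  imports Defs
begin

text \<open>Write m for the middle index.  The m-th row and column of J are the m-th unit vector,
  so comparing the (m, m) entries of M^T J = J M^-1, where M^-1 = adj M because det M = 1, gives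
  M_mm = det M(m|m).  For a totally positive matrix A, det A \<le> a_mm det A(m|m) (a case of
  Koteljanskii's inequality), which follows by induction on the size from the Desnanot-Jacobi
  identity and the positivity of all minors.  With det M = 1 this yields 1 \<le> M_mm^2, and
  M_mm > 0.\<close>

lemma cofactor_diag: "cofactor A i i = det (mat_delete A i i)"
  by (simp add: cofactor_def)

lemma index_mat_delete:
  assumes "i' < dim_row A - 1" "j' < dim_col A - 1"
  shows "mat_delete A i j $$ (i', j') = A $$ (insert_index i i', insert_index j j')"
  using assms unfolding mat_delete_def insert_index_def by simp

lemma insert_index_eq_iff [simp]: "insert_index i a = insert_index i b \<longleftrightarrow> a = b"
  unfolding insert_index_def by auto

lemma mat_delete_cong_col:
  assumes "dim_row A = dim_row B" "dim_col A = dim_col B"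
    and "\<And>i' j'. i' < dim_row A \<Longrightarrow> j' < dim_col A \<Longrightarrow> j' \<noteq> j \<Longrightarrow> A $$ (i', j') = B $$ (i', j')"
  shows "mat_delete A i j = mat_delete B i j"
  using assms by (intro eq_matI) (auto simp: index_mat_delete insert_index_def)

lemma det_diagonal_column:
  assumes A: "(A :: 'a :: comm_ring_1 mat) \<in> carrier_mat n n" and j: "j < n"
    and zero: "\<And>i. i < n \<Longrightarrow> i \<noteq> j \<Longrightarrow> A $$ (i, j) = 0"
  shows "det A = A $$ (j, j) * det (mat_delete A j j)"
proof -
  have "det A = (\<Sum>i<n. A $$ (i, j) * cofactor A i j)"
    by (rule laplace_expansion_column[OF A j])
  also have "\<dots> = (\<Sum>i<n. if i = j then A $$ (j, j) * cofactor A j j else 0)"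
    by (rule sum.cong) (auto simp: zero)
  finally show ?thesis using j by (simp add: cofactor_diag)
qed

lemma inj_moving_into_pair:
  assumes "inj \<sigma>" "m \<noteq> p" and moved: "\<And>i. \<sigma> i \<noteq> i \<Longrightarrow> \<sigma> i \<in> {m, p}"
  shows "\<sigma> = id \<or> \<sigma> = Transposition.transpose m p"
proof -
  have pair: "\<sigma> m \<in> {m, p}" "\<sigma> p \<in> {m, p}" "\<sigma> m \<noteq> \<sigma> p"
    using moved assms(1,2) by (auto dest: injD)
  then have image_pair: "{\<sigma> m, \<sigma> p} = {m, p}" by auto
  have fixed: "\<sigma> i = i" if "i \<notin> {m, p}" for i
    using moved[of i] image_pair that injD[OF assms(1), of i m] injD[OF assms(1), of i p] by blast
  show ?thesis
  proof (cases "\<sigma> m = m")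
    case True
    with pair have "\<sigma> p = p" by auto
    with True have "\<sigma> x = x" for x using fixed[of x] by (cases "x = m \<or> x = p") auto
    then have "\<sigma> = id" by auto
    then show ?thesis ..
  next
    case False
    with pair have "\<sigma> = Transposition.transpose m p"
      using fixed by (intro ext) (auto simp: Transposition.transpose_def)
    then show ?thesis ..
  qed
qed

lemma det_identity_except_two_columns:
  fixes X :: "'a :: comm_ring_1 mat"
  assumes X: "X \<in> carrier_mat n n" and m: "m < n" and p: "p < n" and "m \<noteq> p"
    and unit: "\<And>i j. i < n \<Longrightarrow> j < n \<Longrightarrow> j \<notin> {m, p} \<Longrightarrow> X $$ (i, j) = (if i = j then 1 else 0)"
  shows "det X = X $$ (m, m) * X $$ (p, p) - X $$ (m, p) * X $$ (p, m)"
proof -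
  let ?t = "Transposition.transpose m p"
  let ?g = "\<lambda>\<sigma>. of_int (sign \<sigma>) * (\<Prod>i=0..<n. X $$ (i, \<sigma> i))"
  have prod_pair: "(\<Prod>i=0..<n. X $$ (i, \<sigma> i)) = X $$ (m, \<sigma> m) * X $$ (p, \<sigma> p)"
    if "\<sigma> = id \<or> \<sigma> = ?t" for \<sigma>
  proof -
    have "\<sigma> i = i" if "i \<notin> {m, p}" for i
      using \<open>\<sigma> = id \<or> \<sigma> = ?t\<close> that by auto
    then have "(\<Prod>i=0..<n. X $$ (i, \<sigma> i)) = (\<Prod>i\<in>{m, p}. X $$ (i, \<sigma> i))"
      using m p unit by (intro prod.mono_neutral_right) auto
    then show ?thesis using \<open>m \<noteq> p\<close> by simp
  qed
  have vanish: "?g \<sigma> = 0" if \<sigma>: "\<sigma> permutes {0..<n}" and "\<sigma> \<notin> {id, ?t}" for \<sigma>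
  proof -
    obtain i where i: "\<sigma> i \<noteq> i" "\<sigma> i \<notin> {m, p}"
      using inj_moving_into_pair[OF permutes_inj[OF \<sigma>] \<open>m \<noteq> p\<close>] \<open>\<sigma> \<notin> {id, ?t}\<close> by blast
    then have "i < n" "\<sigma> i < n"
      using permutes_not_in[OF \<sigma>] permutes_in_image[OF \<sigma>] by fastforce+
    with i have "X $$ (i, \<sigma> i) = 0" using unit by auto
    with \<open>i < n\<close> have "(\<Prod>i=0..<n. X $$ (i, \<sigma> i)) = 0"
      by (intro prod_zero) auto
    then show ?thesis by simp
  qed
  have "det X = (\<Sum>\<sigma> | \<sigma> permutes {0..<n}. ?g \<sigma>)" by (rule det_def'[OF X])
  also have "\<dots> = (\<Sum>\<sigma>\<in>{id, ?t}. ?g \<sigma>)"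
    using m p vanish by (intro sum.mono_neutral_right) (auto simp: finite_permutations permutes_swap_id)
  also have "\<dots> = ?g id + ?g ?t"
  proof -
    have "?t m = p" by simp
    then have "id \<noteq> ?t" using \<open>m \<noteq> p\<close> by (metis id_apply)
    then show ?thesis by simp
  qed
  also have "\<dots> = X $$ (m, m) * X $$ (p, p) - X $$ (m, p) * X $$ (p, m)"
    using prod_pair[of id] prod_pair[of ?t] \<open>m \<noteq> p\<close> by (simp add: sign_swap_id)
  finally show ?thesis .
qed

lemma det_two_diagonal_columns:
  fixes Y :: "'a :: comm_ring_1 mat"
  assumes Y: "Y \<in> carrier_mat n n" and m: "m < n" and p: "p < n" and "m \<noteq> p"
    and diag: "\<And>i j. i < n \<Longrightarrow> j \<in> {m, p} \<Longrightarrow> Y $$ (i, j) = (if i = j then c else 0)"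
  shows "det Y = c * c * det (mat_delete (mat_delete Y m m) (delete_index m p) (delete_index m p))"
proof -
  define p' where "p' = delete_index m p"
  define Y1 where "Y1 = mat_delete Y m m"
  have p': "p' < n - 1" "insert_index m p' = p"
    using m p \<open>m \<noteq> p\<close> unfolding p'_def delete_index_def insert_index_def by auto
  have Y1: "Y1 \<in> carrier_mat (n - 1) (n - 1)" using mat_delete_carrier[OF Y] by (simp add: Y1_def)
  have "Y1 $$ (a, p') = (if a = p' then c else 0)" if "a < n - 1" for a
  proof -
    have "insert_index m a < n" using that by (auto simp: insert_index_def)
    then show ?thesis using that p' Y diag[of _ p] by (auto simp: Y1_def index_mat_delete)
  qed
  then have "det Y1 = c * det (mat_delete Y1 p' p')"
    using det_diagonal_column[OF Y1 p'(1)] p' by simp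
  moreover have "det Y = c * det Y1"
    using det_diagonal_column[OF Y m] diag m by (simp add: Y1_def)
  ultimately show ?thesis by (simp add: Y1_def p'_def)
qed

lemma desnanot_jacobi:
  fixes A :: "'a :: idom mat"
  assumes A: "A \<in> carrier_mat n n" and m: "m < n" and p: "p < n" and "m \<noteq> p"
    and "det A \<noteq> 0"
  shows "det A * det (mat_delete (mat_delete A m m) (delete_index m p) (delete_index m p))
    = det (mat_delete A m m) * det (mat_delete A p p) - det (mat_delete A m p) * det (mat_delete A p m)"
proof -
  define C where "C = adj_mat A"
  define X where "X = mat n n (\<lambda>(i, j). if j \<in> {m, p} then C $$ (i, j) else if i = j then 1 else 0)"
  define p' where "p' = delete_index m p"
  have C: "C \<in> carrier_mat n n" and AC: "A * C = det A \<cdot>\<^sub>m 1\<^sub>m n"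
    using adj_mat[OF A] unfolding C_def by auto
  have X: "X \<in> carrier_mat n n" and AX: "A * X \<in> carrier_mat n n"
    using A unfolding X_def by auto
  have "det X = X $$ (m, m) * X $$ (p, p) - X $$ (m, p) * X $$ (p, m)"
    by (rule det_identity_except_two_columns[OF X m p \<open>m \<noteq> p\<close>]) (auto simp: X_def)
  also have "\<dots> = C $$ (m, m) * C $$ (p, p) - C $$ (m, p) * C $$ (p, m)"
    using m p by (simp add: X_def)
  also have "\<dots> = det (mat_delete A m m) * det (mat_delete A p p) - det (mat_delete A m p) * det (mat_delete A p m)"
  proof -
    have "p + m + (m + p) = 2 * (m + p)" by simp
    then have "(-1 :: 'a) ^ (p + m + (m + p)) = 1" by (simp only: power_minus1_even)
    then show ?thesis using A m p by (simp add: C_def adj_mat_def cofactor_def flip: power_add)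
  qed
  finally have det_X: "det X = \<dots>" .
  have col_X: "col X j = (if j \<in> {m, p} then col C j else unit_vec n j)" if "j < n" for j
    using that C unfolding X_def by (intro eq_vecI) auto
  have AX_entry: "(A * X) $$ (i, j) = (if j \<in> {m, p} then (if i = j then det A else 0) else A $$ (i, j))"
    if "i < n" "j < n" for i j
  proof -
    have "(A * X) $$ (i, j) = row A i \<bullet> col X j" using A X that by simp
    also have "\<dots> = (if j \<in> {m, p} then (A * C) $$ (i, j) else A $$ (i, j))"
      using A C that by (simp add: col_X)
    finally show ?thesis using that by (simp add: AC)
  qed
  have "det (A * X) = det A * det A * det (mat_delete (mat_delete (A * X) m m) p' p')"
    unfolding p'_def using m p
    by (intro det_two_diagonal_columns[OF AX m p \<open>m \<noteq> p\<close>]) (auto simp: AX_entry)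
  also have "mat_delete (mat_delete (A * X) m m) p' p' = mat_delete (mat_delete A m m) p' p'"
  proof (rule mat_delete_cong_col)
    fix a b assume ab: "a < dim_row (mat_delete (A * X) m m)" "b < dim_col (mat_delete (A * X) m m)"
      and "b \<noteq> p'"
    then have "insert_index m b \<noteq> p" "insert_index m b \<noteq> m"
      using m p \<open>m \<noteq> p\<close> by (auto simp: p'_def insert_index_def delete_index_def)
    with ab show "mat_delete (A * X) m m $$ (a, b) = mat_delete A m m $$ (a, b)"
      using A X AX_entry by (auto simp: index_mat_delete insert_index_def)
  qed (use A X in auto)
  finally have "det A * det X = det A * (det A * det (mat_delete (mat_delete A m m) p' p'))"
    using det_mult[OF A X] by simp
  then show ?thesis using \<open>det A \<noteq> 0\<close> det_X by (simp add: p'_def)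
qed

lemma strict_mono_insert_index: "strict_mono (insert_index i)"
  unfolding strict_mono_def insert_index_def by auto

lemma pick_strict_mono_image:
  assumes f: "strict_mono f" and r: "r < card I"
  shows "pick (f ` I) r = f (pick I r)"
proof -
  have "{a \<in> f ` I. a < f (pick I r)} = f ` {b \<in> I. b < pick I r}"
    using strict_mono_less[OF f] by auto
  also have "card \<dots> = card {b \<in> I. b < pick I r}"
    by (rule card_image[OF strict_mono_imp_inj_on[OF f]])
  finally have "card {a \<in> f ` I. a < f (pick I r)} = r"
    using card_pick r by simp
  moreover have "f (pick I r) \<in> f ` I" using pick_in_set r by blast
  ultimately show ?thesis using pick_card_in_set[of "f (pick I r)" "f ` I"] by simp
qed

lemma submatrix_mat_delete:
  assumes I: "I \<subseteq> {0..<dim_row A - 1}" and K: "K \<subseteq> {0..<dim_col A - 1}"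
  shows "submatrix (mat_delete A i j) I K = submatrix A (insert_index i ` I) (insert_index j ` K)"
proof -
  have rows: "{x. x < dim_row A - 1 \<and> x \<in> I} = I" "{x. x < dim_row A \<and> x \<in> insert_index i ` I} = insert_index i ` I"
    using I by (auto simp: insert_index_def)
  have cols: "{x. x < dim_col A - 1 \<and> x \<in> K} = K" "{x. x < dim_col A \<and> x \<in> insert_index j ` K} = insert_index j ` K"
    using K by (auto simp: insert_index_def)
  have card_ins: "card (insert_index i ` I) = card I" "card (insert_index j ` K) = card K"
    by (simp_all add: card_image strict_mono_imp_inj_on[OF strict_mono_insert_index])
  have "pick I a < dim_row A - 1" if "a < card I" for a
    using I pick_in_set[of a I] that by auto
  moreover have "pick K b < dim_col A - 1" if "b < card K" for b
    using K pick_in_set[of b K] that by auto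
  ultimately show ?thesis
    unfolding submatrix_def mat_delete_dim rows cols card_ins
    by (intro eq_matI) (simp_all add: index_mat_delete pick_strict_mono_image[OF strict_mono_insert_index])
qed

lemma totally_positive_mat_delete:
  assumes "totally_positive A"
  shows "totally_positive (mat_delete A i j)"
  unfolding totally_positive_def
proof (intro allI impI)
  fix I K assume I: "I \<subseteq> {0..<dim_row (mat_delete A i j)}" and K: "K \<subseteq> {0..<dim_col (mat_delete A i j)}"
    and "I \<noteq> {}" "card I = card K"
  then have "insert_index i ` I \<subseteq> {0..<dim_row A}" "insert_index j ` K \<subseteq> {0..<dim_col A}"
    by (auto simp: insert_index_def)
  moreover have "card (insert_index i ` I) = card (insert_index j ` K)"
    using \<open>card I = card K\<close>
    by (simp add: card_image strict_mono_imp_inj_on[OF strict_mono_insert_index])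
  ultimately have "0 < det (submatrix A (insert_index i ` I) (insert_index j ` K))"
    using assms \<open>I \<noteq> {}\<close> unfolding totally_positive_def by blast
  then show "0 < det (submatrix (mat_delete A i j) I K)"
    using I K by (simp add: submatrix_mat_delete)
qed

lemma totally_positive_det_pos:
  assumes "totally_positive A" and A: "A \<in> carrier_mat n n"
  shows "0 < det A"
proof (cases "n = 0")
  case True
  then show ?thesis using A by (simp add: det_def')
next
  case False
  have "pick {0..<n} a = a" if "a < n" for a
  proof -
    have "{b \<in> {0..<n}. b < a} = {0..<a}" using that by auto
    then show ?thesis using pick_card_in_set[of a "{0..<n}"] that by simp
  qed
  then have "submatrix A {0..<n} {0..<n} = A"
    using A unfolding submatrix_def by (intro eq_matI) auto
  moreover have "0 < det (submatrix A {0..<n} {0..<n})"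
    using assms False unfolding totally_positive_def by auto
  ultimately show ?thesis by simp
qed

lemma totally_positive_det_le_diag_mult_minor:
  assumes "A \<in> carrier_mat n n" "totally_positive A" "m < n"
  shows "det A \<le> A $$ (m, m) * det (mat_delete A m m)"
  using assms
proof (induction n arbitrary: A m)
  case 0
  then show ?case by simp
next
  case (Suc n)
  note A = Suc.prems(1) and tp = Suc.prems(2) and m = Suc.prems(3)
  have minor_pos: "0 < det (mat_delete A i j)" for i j
    using totally_positive_det_pos[OF totally_positive_mat_delete[OF tp]] mat_delete_carrier[OF A] by fastforce
  show ?case
  proof (cases "n = 0")
    case True
    with m show ?thesis using det_diagonal_column[OF A m] by simp
  next
    case False
    define p where "p = (if m = 0 then 1 else (0 :: nat))"
    define B where "B = mat_delete A p p"
    define m' where "m' = delete_index p m"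
    have p: "p < Suc n" "p \<noteq> m" using False unfolding p_def by auto
    have B: "B \<in> carrier_mat n n" using mat_delete_carrier[OF A] by (simp add: B_def)
    have m': "m' < n" "insert_index p m' = m"
      using m p unfolding m'_def delete_index_def insert_index_def by auto
    have "det B \<le> B $$ (m', m') * det (mat_delete B m' m')"
      using Suc.IH[OF B _ m'(1)] tp by (simp add: B_def totally_positive_mat_delete)
    also have "B $$ (m', m') = A $$ (m, m)"
      using A m' by (simp add: B_def index_mat_delete)
    finally have IH: "det B \<le> A $$ (m, m) * det (mat_delete B m' m')" .
    have D_pos: "0 < det (mat_delete B m' m')"
      using totally_positive_det_pos[OF totally_positive_mat_delete] mat_delete_carrier[OF B]
        totally_positive_mat_delete[OF tp] unfolding B_def by blast
    have "det A * det (mat_delete B m' m')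
        = det B * det (mat_delete A m m) - det (mat_delete A p m) * det (mat_delete A m p)"
      using desnanot_jacobi[OF A p(1) m p(2)] totally_positive_det_pos[OF tp A]
      by (simp add: B_def m'_def)
    also have "\<dots> < det B * det (mat_delete A m m)"
      using minor_pos by simp
    also have "\<dots> \<le> A $$ (m, m) * det (mat_delete A m m) * det (mat_delete B m' m')"
      using mult_right_mono[OF IH less_imp_le[OF minor_pos]] by (simp add: ac_simps)
    finally show ?thesis using D_pos by simp
  qed
qed

lemma diag_entry_eq_principal_minor_if_preserves_form:
  fixes M J :: "'a :: comm_ring_1 mat"
  assumes M: "M \<in> carrier_mat n n" and J: "J \<in> carrier_mat n n"
    and preserves: "transpose_mat M * J * M = J" and "det M = 1" and m: "m < n"
    and row_J: "row J m = unit_vec n m" and col_J: "col J m = unit_vec n m"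
  shows "M $$ (m, m) = det (mat_delete M m m)"
proof -
  define C where "C = adj_mat M"
  have C: "C \<in> carrier_mat n n" and MC: "M * C = 1\<^sub>m n"
    using adj_mat[OF M] \<open>det M = 1\<close> unfolding C_def by auto
  have "transpose_mat M * J = transpose_mat M * J * (M * C)"
    using M J by (simp add: MC)
  also have "\<dots> = (transpose_mat M * J * M) * C"
    using M J C by (simp add: assoc_mult_mat[of _ n n _ n _ n])
  finally have "transpose_mat M * J = J * C" by (simp add: preserves)
  moreover have "(transpose_mat M * J) $$ (m, m) = M $$ (m, m)"
    using M J m by (simp add: col_J)
  moreover have "(J * C) $$ (m, m) = C $$ (m, m)"
    using J C m by (simp add: row_J)
  ultimately have "M $$ (m, m) = C $$ (m, m)" by metis
  then show ?thesis using M m by (simp add: C_def adj_mat_def cofactor_diag)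
qed

lemma Jform_middle:
  assumes "n \<ge> 1"
  shows "row (Jform n) (2*n - 1) = unit_vec (4*n - 1) (2*n - 1)"
    and "col (Jform n) (2*n - 1) = unit_vec (4*n - 1) (2*n - 1)"
proof -
  have sign: "(-1 :: real) ^ (2*n - 1 + 1) = 1"
    using assms by simp
  have "2*n - 1 + k = 4*n - 2 \<longleftrightarrow> k = 2*n - 1" "k + (2*n - 1) = 4*n - 2 \<longleftrightarrow> k = 2*n - 1" for k
    using assms by arith+
  with sign show "row (Jform n) (2*n - 1) = unit_vec (4*n - 1) (2*n - 1)"
    and "col (Jform n) (2*n - 1) = unit_vec (4*n - 1) (2*n - 1)"
    using assms by (auto intro!: eq_vecI simp: Jform_def)
qed

theorem lemma4p7:
  fixes n :: nat and M :: "real mat"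
  assumes "n \<ge> 1"
    and "M \<in> SO_2n_2n1 n"
    and "totally_positive M"
  shows "M $$ (2*n - 1, 2*n - 1) \<ge> 1"
proof -
  let ?m = "2*n - 1"
  have M: "M \<in> carrier_mat (4*n - 1) (4*n - 1)"
    and preserves: "transpose_mat M * Jform n * M = Jform n" and "det M = 1"
    using assms(2) unfolding SO_2n_2n1_def by auto
  have m: "?m < 4*n - 1" using assms(1) by simp
  have entry: "M $$ (?m, ?m) = det (mat_delete M ?m ?m)"
    using diag_entry_eq_principal_minor_if_preserves_form[OF M _ preserves \<open>det M = 1\<close> m]
      Jform_middle[OF assms(1)] by (simp add: Jform_def)
  have "1 \<le> M $$ (?m, ?m) * det (mat_delete M ?m ?m)"
    using totally_positive_det_le_diag_mult_minor[OF M assms(3) m] \<open>det M = 1\<close> by simp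
  then have "1\<^sup>2 \<le> (M $$ (?m, ?m))\<^sup>2"
    unfolding entry[symmetric] power2_eq_square by simp
  moreover have "0 < M $$ (?m, ?m)"
    using entry totally_positive_det_pos[OF totally_positive_mat_delete[OF assms(3)]
      mat_delete_carrier[OF M]] by simp
  ultimately show ?thesis by (rule power2_le_imp_le[OF _ less_imp_le])
qed

end
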